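(* Let $m\ge2$, $n\ge2$. For every $\epsilon\in(0,1)$ there is a $(1-\epsilon)$-cyclic-envy-free mechanism $(A,p)$ for the job scheduling problem over the general instances $\mathcal{C}=\mathbb{R}_{\ge0}^{m\times n}$ such that $\max_{i\in[m]}c_i(A(c)_i)\le\frac1\epsilon\,\mathrm{OPT}(c)$ for every $c\in\mathcal{C}$.
   Context: Machines $[m]$, jobs $[n]$; instance $c\in\mathbb{R}_{\ge0}^{m\times n}$, $c_i(S)=\sum_{j\in S}c_{i,j}$. An allocation is a tuple of pairwise disjoint subsets of $[n]$ with union $[n]$. A mechanism $(A,p)$ assigns to each instance an allocation $A(c)=(A_1,\dots,A_m)$ and payments $p(c)\in\mathbb{R}^m$. For $\alpha\in(0,1]$, $(A,p)$ is $\alpha$-cyclic-envy-free if for every instance $c$ and every $i\in[m]$: $\alpha\,c_i(A_i)-p_i\le c_i(A_{i-1})-p_{i-1}$, with the convention $A_0=A_m$, $p_0=p_m$. $\mathrm{OPT}(c)=\min_X\max_{i\in[m]}c_i(X_i)$ over all allocations $X$. *)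

theory Defs
  imports Complex_Main
begin

(* Machines are 1..m, jobs are 1..n. An valid_instance is c :: nat => nat => real,
   c i j = cost of job j on machine i; only entries on {1..m} x {1..n} matter. *)

definition valid_instance :: "nat \<Rightarrow> nat \<Rightarrow> (nat \<Rightarrow> nat \<Rightarrow> real) \<Rightarrow> bool" where
  "valid_instance m n c \<longleftrightarrow> (\<forall>i\<in>{1..m}. \<forall>j\<in>{1..n}. c i j \<ge> 0)"

definition cost :: "(nat \<Rightarrow> nat \<Rightarrow> real) \<Rightarrow> nat \<Rightarrow> nat set \<Rightarrow> real" where
  "cost c i S = (\<Sum>j\<in>S. c i j)"

definition is_allocation :: "nat \<Rightarrow> nat \<Rightarrow> (nat \<Rightarrow> nat set) \<Rightarrow> bool" where
  "is_allocation m n X \<longleftrightarrow>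
     (\<forall>i\<in>{1..m}. \<forall>k\<in>{1..m}. i \<noteq> k \<longrightarrow> X i \<inter> X k = {}) \<and>
     (\<Union>i\<in>{1..m}. X i) = {1..n}"

definition makespan :: "nat \<Rightarrow> (nat \<Rightarrow> nat \<Rightarrow> real) \<Rightarrow> (nat \<Rightarrow> nat set) \<Rightarrow> real" where
  "makespan m c X = Max ((\<lambda>i. cost c i (X i)) ` {1..m})"

definition OPT :: "nat \<Rightarrow> nat \<Rightarrow> (nat \<Rightarrow> nat \<Rightarrow> real) \<Rightarrow> real" where
  "OPT m n c = Inf ((\<lambda>X. makespan m c X) ` {X. is_allocation m n X})"

definition pred_machine :: "nat \<Rightarrow> nat \<Rightarrow> nat" where
  "pred_machine m i = (if i = 1 then m else i - 1)"

(* A mechanism: for each valid_instance an allocation A c and payments p c.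
   It must be a function of the valid_instance, i.e. of the entries on {1..m} x {1..n}. *)
definition is_mechanism :: "nat \<Rightarrow> nat \<Rightarrow> ((nat \<Rightarrow> nat \<Rightarrow> real) \<Rightarrow> nat \<Rightarrow> nat set)
    \<Rightarrow> ((nat \<Rightarrow> nat \<Rightarrow> real) \<Rightarrow> nat \<Rightarrow> real) \<Rightarrow> bool" where
  "is_mechanism m n A p \<longleftrightarrow>
     (\<forall>c. valid_instance m n c \<longrightarrow> is_allocation m n (A c)) \<and>
     (\<forall>c c'. valid_instance m n c \<longrightarrow> valid_instance m n c' \<longrightarrow>
        (\<forall>i\<in>{1..m}. \<forall>j\<in>{1..n}. c i j = c' i j) \<longrightarrow>
        (\<forall>i\<in>{1..m}. A c i = A c' i \<and> p c i = p c' i))"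

definition cyclic_envy_free :: "nat \<Rightarrow> nat \<Rightarrow> real \<Rightarrow> ((nat \<Rightarrow> nat \<Rightarrow> real) \<Rightarrow> nat \<Rightarrow> nat set)
    \<Rightarrow> ((nat \<Rightarrow> nat \<Rightarrow> real) \<Rightarrow> nat \<Rightarrow> real) \<Rightarrow> bool" where
  "cyclic_envy_free m n \<alpha> A p \<longleftrightarrow>
     (\<forall>c. valid_instance m n c \<longrightarrow> (\<forall>i\<in>{1..m}.
        \<alpha> * cost c i (A c i) - p c i
          \<le> cost c i (A c (pred_machine m i)) - p c (pred_machine m i)))"

end

theory Submission imports Defs "HOL-Library.FuncSet" "HOL-Number_Theory.Cong"
begin

text \<open>
Start from an optimal assignment and move every job forward along the cycle
\<open>1 \<rightarrow> 2 \<rightarrow> \<dots> \<rightarrow> m \<rightarrow> 1\<close> as long as the next machine values it at less than \<open>\<alpha> = 1 - \<epsilon>\<close>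
times the current one. Going once around the cycle returns to the starting cost, so the walk
stops within \<open>m\<close> steps. On stopping, the successor values the job at least \<open>\<alpha>\<close> times the
holder's cost, so summed around the cycle the \<open>\<alpha>\<close>-scaled own costs are dominated by the
successors' costs of their predecessors' bundles, and prefix sums of the differences serve as
payments. A job moved \<open>k\<close> steps costs at most \<open>\<alpha>^k\<close> times its optimal cost, and all jobs
arriving at a machine after \<open>k\<close> steps come from one machine of the optimal assignment; hence
each load is at most \<open>(\<Sum>k<m. \<alpha>^k) \<cdot> OPT \<le> OPT / \<epsilon>\<close>.
\<close>

section \<open>Cyclic shifts of machines\<close>

definition cyc_shift :: "nat \<Rightarrow> nat \<Rightarrow> nat \<Rightarrow> nat" where
  "cyc_shift m k a = (a - 1 + k) mod m + 1"

lemma cyc_shift_in_range: "m \<ge> 1 \<Longrightarrow> cyc_shift m k a \<in> {1..m}"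
  unfolding cyc_shift_def by (simp add: Suc_leI)

lemma cyc_shift_0: "a \<in> {1..m} \<Longrightarrow> cyc_shift m 0 a = a"
  unfolding cyc_shift_def by auto

lemma cyc_shift_period: "a \<in> {1..m} \<Longrightarrow> cyc_shift m m a = a"
  unfolding cyc_shift_def using mod_add_self2[of "a - 1" m] by auto

lemma cyc_shift_inj:
  assumes "a \<in> {1..m}" "b \<in> {1..m}" "cyc_shift m k a = cyc_shift m k b"
  shows "a = b"
proof -
  have "[a - 1 + k = b - 1 + k] (mod m)"
    using assms(3) unfolding cyc_shift_def cong_def by simp
  then have "(a - 1) mod m = (b - 1) mod m"
    using cong_add_rcancel_nat unfolding cong_def by blast
  then show ?thesis using assms(1,2) by auto
qed

lemma pred_machine_cyc_shift_Suc:
  assumes "m \<ge> 1"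
  shows "pred_machine m (cyc_shift m (Suc k) a) = cyc_shift m k a"
proof -
  define r where "r = (a - 1 + k) mod m"
  have "r < m" using assms unfolding r_def by simp
  moreover have "cyc_shift m (Suc k) a = (if Suc r = m then 0 else Suc r) + 1"
    unfolding cyc_shift_def r_def by (simp add: mod_Suc)
  ultimately show ?thesis unfolding pred_machine_def cyc_shift_def r_def[symmetric] by auto
qed

lemma pred_machine_in_range: "m \<ge> 1 \<Longrightarrow> i \<in> {1..m} \<Longrightarrow> pred_machine m i \<in> {1..m}"
  unfolding pred_machine_def by auto

lemma inj_on_pred_machine: "inj_on (pred_machine m) {1..m}"
  unfolding pred_machine_def inj_on_def by auto

lemma sum_pred_machine:
  assumes "m \<ge> 1"
  shows "(\<Sum>i=1..m. f (pred_machine m i)) = (\<Sum>i=1..m. f i)"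
proof (rule sum.reindex_bij_betw)
  show "bij_betw (pred_machine m) {1..m} {1..m}"
    unfolding bij_betw_def
    using endo_inj_surj[OF _ _ inj_on_pred_machine] pred_machine_in_range[OF assms]
      inj_on_pred_machine by blast
qed

section \<open>Contracting steps of real sequences\<close>

lemma geometric_decay:
  fixes f :: "nat \<Rightarrow> real"
  assumes "0 \<le> \<alpha>" and "\<And>l. l < k \<Longrightarrow> f (Suc l) \<le> \<alpha> * f l"
  shows "f k \<le> \<alpha> ^ k * f 0"
  using assms(2)
proof (induction k)
  case (Suc k)
  then have "f (Suc k) \<le> \<alpha> * f k" by simp
  also have "\<dots> \<le> \<alpha> * (\<alpha> ^ k * f 0)" using Suc assms(1) by (simp add: mult_left_mono)
  finally show ?case by simp
qed simp

lemma exists_non_contracting_step: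
  fixes f :: "nat \<Rightarrow> real"
  assumes "0 \<le> \<alpha>" "\<alpha> \<le> 1" "m \<ge> 1" "f m = f 0" "0 \<le> f 0"
  shows "\<exists>k<m. \<alpha> * f k \<le> f (Suc k)"
proof (rule ccontr)
  assume "\<not> ?thesis"
  then have contr: "\<And>k. k < m \<Longrightarrow> f (Suc k) < \<alpha> * f k" by force
  have "f m < \<alpha> * f (m - 1)" using contr[of "m - 1"] assms(3) by simp
  also have "\<dots> \<le> \<alpha> * (\<alpha> ^ (m - 1) * f 0)"
    using geometric_decay[of \<alpha> "m - 1" f] contr assms(1) by (simp add: less_imp_le mult_left_mono)
  also have "\<dots> = \<alpha> ^ m * f 0" using assms(3) by (simp add: power_eq_if)
  also have "\<dots> \<le> f 0" using assms by (simp add: mult_left_le_one_le power_le_one)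
  finally show False using assms(4) by simp
qed

lemma least_non_contracting_step:
  fixes f :: "nat \<Rightarrow> real"
  assumes "0 \<le> \<alpha>" and "\<alpha> * f k \<le> f (Suc k)"
  defines "K \<equiv> LEAST k. \<alpha> * f k \<le> f (Suc k)"
  shows "K \<le> k" and "\<alpha> * f K \<le> f (Suc K)" and "f K \<le> \<alpha> ^ K * f 0"
proof -
  show "K \<le> k" unfolding K_def by (rule Least_le) (rule assms(2))
  show "\<alpha> * f K \<le> f (Suc K)" unfolding K_def by (rule LeastI) (rule assms(2))
  have "f (Suc l) \<le> \<alpha> * f l" if "l < K" for l
    using not_less_Least[OF that[unfolded K_def]] by simp
  then show "f K \<le> \<alpha> ^ K * f 0" using geometric_decay assms(1) by blast
qed

section \<open>Assignments and optimal allocations\<close>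

definition alloc_of :: "nat \<Rightarrow> (nat \<Rightarrow> nat) \<Rightarrow> nat \<Rightarrow> nat set" where
  "alloc_of n g a = {j \<in> {1..n}. g j = a}"

lemma is_allocation_alloc_of:
  "(\<And>j. j \<in> {1..n} \<Longrightarrow> g j \<in> {1..m}) \<Longrightarrow> is_allocation m n (alloc_of n g)"
  unfolding is_allocation_def alloc_of_def by auto

lemma alloc_of_subset: "alloc_of n g a \<subseteq> {1..n}"
  unfolding alloc_of_def by auto

lemma allocation_subset: "is_allocation m n X \<Longrightarrow> a \<in> {1..m} \<Longrightarrow> X a \<subseteq> {1..n}"
  unfolding is_allocation_def by auto

lemma allocation_eq_alloc_of:
  assumes "is_allocation m n X"
  obtains g where "g \<in> {1..n} \<rightarrow>\<^sub>E {1..m}" "\<And>a. a \<in> {1..m} \<Longrightarrow> alloc_of n g a = X a"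
proof
  have disj: "\<And>i k. i \<in> {1..m} \<Longrightarrow> k \<in> {1..m} \<Longrightarrow> i \<noteq> k \<Longrightarrow> X i \<inter> X k = {}"
    and cover: "(\<Union>i\<in>{1..m}. X i) = {1..n}"
    using assms unfolding is_allocation_def by auto
  define g where "g = (\<lambda>j\<in>{1..n}. SOME i. i \<in> {1..m} \<and> j \<in> X i)"
  have g: "g j \<in> {1..m} \<and> j \<in> X (g j)" if "j \<in> {1..n}" for j
  proof -
    have "\<exists>i. i \<in> {1..m} \<and> j \<in> X i" using cover that by blast
    from someI_ex[OF this] show ?thesis unfolding g_def using that by simp
  qed
  show "g \<in> {1..n} \<rightarrow>\<^sub>E {1..m}" using g unfolding g_def by auto
  fix a assume a: "a \<in> {1..m}"
  show "alloc_of n g a = X a"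
  proof
    show "alloc_of n g a \<subseteq> X a" unfolding alloc_of_def using g by auto
    show "X a \<subseteq> alloc_of n g a"
      unfolding alloc_of_def using g disj a cover by blast
  qed
qed

lemma makespan_cong:
  "(\<And>a. a \<in> {1..m} \<Longrightarrow> cost c a (X a) = cost c' a (Y a)) \<Longrightarrow> makespan m c X = makespan m c' Y"
  unfolding makespan_def by (metis (no_types, lifting) image_cong)

lemma cost_le_makespan: "a \<in> {1..m} \<Longrightarrow> cost c a (X a) \<le> makespan m c X"
  unfolding makespan_def by (rule Max_ge) auto

lemma makespan_le:
  "(\<And>a. a \<in> {1..m} \<Longrightarrow> cost c a (X a) \<le> B) \<Longrightarrow> m \<ge> 1 \<Longrightarrow> makespan m c X \<le> B"
  unfolding makespan_def by (rule Max.boundedI) auto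

lemma makespan_nonneg:
  assumes "m \<ge> 1" "\<forall>i\<in>{1..m}. \<forall>j\<in>{1..n}. 0 \<le> c i j" "X 1 \<subseteq> {1..n}"
  shows "0 \<le> makespan m c X"
proof -
  have "0 \<le> cost c 1 (X 1)" unfolding cost_def using assms by (intro sum_nonneg) auto
  also have "\<dots> \<le> makespan m c X" using assms(1) by (intro cost_le_makespan) auto
  finally show ?thesis .
qed

definition opt_assignment :: "nat \<Rightarrow> nat \<Rightarrow> (nat \<Rightarrow> nat \<Rightarrow> real) \<Rightarrow> nat \<Rightarrow> nat" where
  "opt_assignment m n c = (SOME g. g \<in> {1..n} \<rightarrow>\<^sub>E {1..m} \<and>
     (\<forall>g'\<in>{1..n} \<rightarrow>\<^sub>E {1..m}. makespan m c (alloc_of n g) \<le> makespan m c (alloc_of n g')))"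

lemma opt_assignment:
  assumes "m \<ge> 1"
  shows "opt_assignment m n c \<in> {1..n} \<rightarrow>\<^sub>E {1..m}"
    and "makespan m c (alloc_of n (opt_assignment m n c)) \<le> OPT m n c"
proof -
  let ?G = "{1..n} \<rightarrow>\<^sub>E {1..m}"
  let ?M = "\<lambda>g. makespan m c (alloc_of n g)"
  have fin: "finite (?M ` ?G)" by (simp add: finite_PiE)
  moreover have "(\<lambda>j\<in>{1..n}. 1) \<in> ?G" using assms by auto
  ultimately have "Min (?M ` ?G) \<in> ?M ` ?G" by (intro Min_in) blast+
  then obtain g where g_min: "Min (?M ` ?G) = ?M g" and g: "g \<in> ?G" by (rule imageE)
  have "?M g \<le> ?M g'" if "g' \<in> ?G" for g'
    unfolding g_min[symmetric] using fin that by (intro Min_le) auto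
  with g have "g \<in> ?G \<and> (\<forall>g'\<in>?G. ?M g \<le> ?M g')" by blast
  then have opt: "opt_assignment m n c \<in> ?G \<and> (\<forall>g'\<in>?G. ?M (opt_assignment m n c) \<le> ?M g')"
    unfolding opt_assignment_def by (rule someI[where P = "\<lambda>g. g \<in> ?G \<and> (\<forall>g'\<in>?G. ?M g \<le> ?M g')"])
  then show "opt_assignment m n c \<in> ?G" by blast
  show "?M (opt_assignment m n c) \<le> OPT m n c"
    unfolding OPT_def
  proof (rule cInf_greatest)
    have "is_allocation m n (alloc_of n (\<lambda>j. 1))" using assms by (intro is_allocation_alloc_of) auto
    then show "(makespan m c) ` {X. is_allocation m n X} \<noteq> {}" by blast
  next
    fix x assume "x \<in> (makespan m c) ` {X. is_allocation m n X}"
    then obtain X where X: "is_allocation m n X" "x = makespan m c X" by blast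
    then obtain g where "g \<in> ?G" "\<And>a. a \<in> {1..m} \<Longrightarrow> alloc_of n g a = X a"
      using allocation_eq_alloc_of by blast
    then show "?M (opt_assignment m n c) \<le> x"
      using opt X(2) makespan_cong[of m c "alloc_of n g" c X] by fastforce
  qed
qed

lemma OPT_nonneg:
  assumes "m \<ge> 1" "\<forall>i\<in>{1..m}. \<forall>j\<in>{1..n}. 0 \<le> c i j"
  shows "0 \<le> OPT m n c"
  unfolding OPT_def
proof (rule cInf_greatest)
  have "is_allocation m n (alloc_of n (\<lambda>j. 1))" using assms(1) by (intro is_allocation_alloc_of) auto
  then show "(makespan m c) ` {X. is_allocation m n X} \<noteq> {}" by blast
qed (use makespan_nonneg[OF assms] allocation_subset assms(1) in auto)

section \<open>Payments from cycle sums\<close>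

text \<open>Prefix sums telescope, so the envy inequality holds with equality for \<open>i > 1\<close>; at machine 1
  the wrap-around term is the full cycle sum, whose sign is the hypothesis \<open>cycle\<close> below.\<close>

definition cyclic_payment ::
    "nat \<Rightarrow> real \<Rightarrow> (nat \<Rightarrow> nat \<Rightarrow> real) \<Rightarrow> (nat \<Rightarrow> nat set) \<Rightarrow> nat \<Rightarrow> real" where
  "cyclic_payment m \<alpha> c A i = (\<Sum>k=1..i. \<alpha> * cost c k (A k) - cost c k (A (pred_machine m k)))"

lemma cyclic_payment_envy:
  assumes "m \<ge> 1" and "i \<in> {1..m}"
    and cycle: "\<alpha> * (\<Sum>k=1..m. cost c k (A k)) \<le> (\<Sum>k=1..m. cost c k (A (pred_machine m k)))"
  shows "\<alpha> * cost c i (A i) - cyclic_payment m \<alpha> c A i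
    \<le> cost c i (A (pred_machine m i)) - cyclic_payment m \<alpha> c A (pred_machine m i)"
proof (cases "i = 1")
  case True
  have "cyclic_payment m \<alpha> c A m \<le> 0"
    using cycle unfolding cyclic_payment_def by (simp add: sum_subtractf sum_distrib_left)
  then show ?thesis using True by (simp add: pred_machine_def cyclic_payment_def)
next
  case False
  then obtain l where "i = Suc l" "l \<ge> 1" using assms(2) by (cases i) auto
  then show ?thesis by (simp add: pred_machine_def cyclic_payment_def sum.cl_ivl_Suc)
qed

lemma alpha_cost_le_cost_pred_sum:
  assumes "m \<ge> 1" and "\<And>i j. i \<in> {1..m} \<Longrightarrow> j \<in> A (pred_machine m i) \<Longrightarrow>
      \<alpha> * c (pred_machine m i) j \<le> c i j"
  shows "\<alpha> * (\<Sum>k=1..m. cost c k (A k)) \<le> (\<Sum>k=1..m. cost c k (A (pred_machine m k)))"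
proof -
  have "\<alpha> * (\<Sum>k=1..m. cost c k (A k)) = (\<Sum>k=1..m. \<alpha> * cost c (pred_machine m k) (A (pred_machine m k)))"
    using sum_pred_machine[OF assms(1), of "\<lambda>k. \<alpha> * cost c k (A k)"] by (simp add: sum_distrib_left)
  also have "\<dots> \<le> (\<Sum>k=1..m. cost c k (A (pred_machine m k)))"
    unfolding cost_def sum_distrib_left using assms(2) by (intro sum_mono) auto
  finally show ?thesis .
qed

section \<open>The shifting mechanism\<close>

definition shift_stop :: "nat \<Rightarrow> real \<Rightarrow> (nat \<Rightarrow> nat \<Rightarrow> real) \<Rightarrow> (nat \<Rightarrow> nat) \<Rightarrow> nat \<Rightarrow> nat" where
  "shift_stop m \<alpha> c g j = (LEAST k. \<alpha> * c (cyc_shift m k (g j)) j \<le> c (cyc_shift m (Suc k) (g j)) j)"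

definition shift_target :: "nat \<Rightarrow> real \<Rightarrow> (nat \<Rightarrow> nat \<Rightarrow> real) \<Rightarrow> (nat \<Rightarrow> nat) \<Rightarrow> nat \<Rightarrow> nat" where
  "shift_target m \<alpha> c g j = cyc_shift m (shift_stop m \<alpha> c g j) (g j)"

context
  fixes m n :: nat and \<alpha> :: real and c :: "nat \<Rightarrow> nat \<Rightarrow> real" and g :: "nat \<Rightarrow> nat"
  assumes m: "m \<ge> 1" and \<alpha>: "0 \<le> \<alpha>" "\<alpha> \<le> 1"
    and nonneg: "\<forall>i\<in>{1..m}. \<forall>j\<in>{1..n}. 0 \<le> c i j" and g: "g \<in> {1..n} \<rightarrow>\<^sub>E {1..m}"
begin

lemma shift_stop:
  assumes j: "j \<in> {1..n}"
  shows "shift_stop m \<alpha> c g j < m"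
    and "\<alpha> * c (shift_target m \<alpha> c g j) j \<le> c (cyc_shift m (Suc (shift_stop m \<alpha> c g j)) (g j)) j"
    and "c (shift_target m \<alpha> c g j) j \<le> \<alpha> ^ shift_stop m \<alpha> c g j * c (g j) j"
proof -
  let ?f = "\<lambda>k. c (cyc_shift m k (g j)) j"
  have gj: "g j \<in> {1..m}" using g j by auto
  have start: "?f 0 = c (g j) j" using cyc_shift_0[OF gj] by simp
  obtain k where k: "k < m" "\<alpha> * ?f k \<le> ?f (Suc k)"
    using exists_non_contracting_step[of \<alpha> m ?f] \<alpha> m gj j nonneg
    by (auto simp: cyc_shift_0 cyc_shift_period)
  note least = least_non_contracting_step[of \<alpha> ?f, OF \<alpha>(1) k(2)]
  show "shift_stop m \<alpha> c g j < m" using least(1) k(1) unfolding shift_stop_def by simp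
  show "\<alpha> * c (shift_target m \<alpha> c g j) j \<le> c (cyc_shift m (Suc (shift_stop m \<alpha> c g j)) (g j)) j"
    using least(2) unfolding shift_target_def shift_stop_def .
  show "c (shift_target m \<alpha> c g j) j \<le> \<alpha> ^ shift_stop m \<alpha> c g j * c (g j) j"
    using least(3) start unfolding shift_target_def shift_stop_def by simp
qed

lemma shift_target_in_range: "shift_target m \<alpha> c g j \<in> {1..m}"
  unfolding shift_target_def using cyc_shift_in_range[OF m] .

lemma shift_target_envy:
  assumes i: "i \<in> {1..m}" and j: "j \<in> alloc_of n (shift_target m \<alpha> c g) (pred_machine m i)"
  shows "\<alpha> * c (pred_machine m i) j \<le> c i j"
proof -
  let ?k = "shift_stop m \<alpha> c g j"
  have jn: "j \<in> {1..n}" and t: "shift_target m \<alpha> c g j = pred_machine m i"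
    using j unfolding alloc_of_def by auto
  have "pred_machine m (cyc_shift m (Suc ?k) (g j)) = pred_machine m i"
    using t pred_machine_cyc_shift_Suc[OF m] unfolding shift_target_def by simp
  then have "cyc_shift m (Suc ?k) (g j) = i"
    using inj_onD[OF inj_on_pred_machine] cyc_shift_in_range[OF m] i by blast
  then show ?thesis using shift_stop(2)[OF jn] t by simp
qed

lemma stop_class_subset_alloc_of:
  "\<exists>a\<in>{1..m}. {j \<in> alloc_of n (shift_target m \<alpha> c g) i. shift_stop m \<alpha> c g j = k}
     \<subseteq> alloc_of n g a"
proof (cases "\<exists>j0\<in>alloc_of n (shift_target m \<alpha> c g) i. shift_stop m \<alpha> c g j0 = k")
  case True
  then obtain j0 where j0: "j0 \<in> alloc_of n (shift_target m \<alpha> c g) i" "shift_stop m \<alpha> c g j0 = k"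
    by blast
  have j0n: "j0 \<in> {1..n}" using j0(1) alloc_of_subset by blast
  have "j \<in> alloc_of n g (g j0)"
    if j: "j \<in> alloc_of n (shift_target m \<alpha> c g) i" "shift_stop m \<alpha> c g j = k" for j
  proof -
    have jn: "j \<in> {1..n}" using j(1) alloc_of_subset by blast
    have "cyc_shift m k (g j) = cyc_shift m k (g j0)"
      using j j0 unfolding alloc_of_def shift_target_def by simp
    then have "g j = g j0" using cyc_shift_inj PiE_mem[OF g jn] PiE_mem[OF g j0n] by blast
    then show ?thesis using jn unfolding alloc_of_def by simp
  qed
  then show ?thesis using PiE_mem[OF g j0n] by blast
next
  case False
  then show ?thesis using m by (intro bexI[of _ 1]) auto
qed

lemma cost_shift_target_le:
  "cost c i (alloc_of n (shift_target m \<alpha> c g) i) \<le> (\<Sum>k<m. \<alpha> ^ k) * makespan m c (alloc_of n g)"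
proof -
  let ?S = "alloc_of n (shift_target m \<alpha> c g) i"
  let ?J = "\<lambda>k. {j \<in> ?S. shift_stop m \<alpha> c g j = k}"
  let ?M = "makespan m c (alloc_of n g)"
  have "cost c i ?S = (\<Sum>k<m. \<Sum>j\<in>?J k. c i j)"
    unfolding cost_def using shift_stop(1) by (intro sum.group[symmetric]) (auto simp: alloc_of_def)
  also have "\<dots> \<le> (\<Sum>k<m. \<alpha> ^ k * ?M)"
  proof (rule sum_mono)
    fix k
    obtain a where a: "a \<in> {1..m}" "?J k \<subseteq> alloc_of n g a"
      using stop_class_subset_alloc_of by blast
    have "c i j \<le> \<alpha> ^ k * c a j" if j: "j \<in> ?J k" for j
    proof -
      have jn: "j \<in> {1..n}" and "shift_target m \<alpha> c g j = i" "shift_stop m \<alpha> c g j = k"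
        using j unfolding alloc_of_def by auto
      moreover have "g j = a" using a(2) j unfolding alloc_of_def by blast
      ultimately show ?thesis using shift_stop(3)[OF jn] by simp
    qed
    then have "(\<Sum>j\<in>?J k. c i j) \<le> (\<Sum>j\<in>?J k. \<alpha> ^ k * c a j)" by (rule sum_mono)
    also have "\<dots> \<le> \<alpha> ^ k * cost c a (alloc_of n g a)"
      unfolding cost_def sum_distrib_left[symmetric] using a nonneg \<alpha>(1)
      by (intro mult_left_mono sum_mono2) (auto simp: alloc_of_def)
    also have "\<dots> \<le> \<alpha> ^ k * ?M" using a(1) \<alpha>(1) by (simp add: cost_le_makespan mult_left_mono)
    finally show "(\<Sum>j\<in>?J k. c i j) \<le> \<alpha> ^ k * ?M" .
  qed
  also have "\<dots> = (\<Sum>k<m. \<alpha> ^ k) * ?M" by (simp add: sum_distrib_right)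
  finally show ?thesis .
qed

end

definition shift_allocation :: "nat \<Rightarrow> nat \<Rightarrow> real \<Rightarrow> (nat \<Rightarrow> nat \<Rightarrow> real) \<Rightarrow> nat \<Rightarrow> nat set" where
  "shift_allocation m n \<alpha> c = alloc_of n (shift_target m \<alpha> c (opt_assignment m n c))"

definition shift_payment :: "nat \<Rightarrow> nat \<Rightarrow> real \<Rightarrow> (nat \<Rightarrow> nat \<Rightarrow> real) \<Rightarrow> nat \<Rightarrow> real" where
  "shift_payment m n \<alpha> c = cyclic_payment m \<alpha> c (shift_allocation m n \<alpha> c)"

context
  fixes m n :: nat and \<alpha> :: real and c :: "nat \<Rightarrow> nat \<Rightarrow> real"
  assumes m: "m \<ge> 1" and \<alpha>: "0 \<le> \<alpha>" "\<alpha> \<le> 1"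
    and nonneg: "\<forall>i\<in>{1..m}. \<forall>j\<in>{1..n}. 0 \<le> c i j"
begin

lemma is_allocation_shift_allocation: "is_allocation m n (shift_allocation m n \<alpha> c)"
  unfolding shift_allocation_def
  using is_allocation_alloc_of shift_target_in_range[OF m \<alpha> nonneg opt_assignment(1)[OF m, of n c]] by blast

lemma shift_mechanism_envy:
  assumes "i \<in> {1..m}"
  shows "\<alpha> * cost c i (shift_allocation m n \<alpha> c i) - shift_payment m n \<alpha> c i
    \<le> cost c i (shift_allocation m n \<alpha> c (pred_machine m i))
       - shift_payment m n \<alpha> c (pred_machine m i)"
  unfolding shift_payment_def
  using shift_target_envy[OF m \<alpha> nonneg opt_assignment(1)[OF m, of n c]]
  by (intro cyclic_payment_envy[OF m assms] alpha_cost_le_cost_pred_sum[OF m])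
     (auto simp: shift_allocation_def)

lemma makespan_shift_allocation:
  "makespan m c (shift_allocation m n \<alpha> c) \<le> (\<Sum>k<m. \<alpha> ^ k) * OPT m n c"
proof -
  let ?M = "makespan m c (alloc_of n (opt_assignment m n c))"
  have "makespan m c (shift_allocation m n \<alpha> c) \<le> (\<Sum>k<m. \<alpha> ^ k) * ?M"
    unfolding shift_allocation_def
    using cost_shift_target_le[OF m \<alpha> nonneg opt_assignment(1)[OF m, of n c]] m by (rule makespan_le)
  also have "\<dots> \<le> (\<Sum>k<m. \<alpha> ^ k) * OPT m n c"
    using opt_assignment(2)[OF m] \<alpha>(1) by (intro mult_left_mono sum_nonneg) auto
  finally show ?thesis .
qed

end

section \<open>Dependence on the relevant entries only\<close>

text \<open>Running the mechanism on the zero-padded instance makes it depend only on the entries in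
  \<open>{1..m} \<times> {1..n}\<close>, as \<open>is_mechanism\<close> demands.\<close>

definition restrict_instance :: "nat \<Rightarrow> nat \<Rightarrow> (nat \<Rightarrow> nat \<Rightarrow> real) \<Rightarrow> nat \<Rightarrow> nat \<Rightarrow> real" where
  "restrict_instance m n c i j = (if i \<in> {1..m} \<and> j \<in> {1..n} then c i j else 0)"

lemma cost_restrict_instance:
  "i \<in> {1..m} \<Longrightarrow> S \<subseteq> {1..n} \<Longrightarrow> cost (restrict_instance m n c) i S = cost c i S"
  unfolding cost_def restrict_instance_def by (rule sum.cong) auto

lemma restrict_instance_nonneg:
  "valid_instance m n c \<Longrightarrow> \<forall>i\<in>{1..m}. \<forall>j\<in>{1..n}. 0 \<le> restrict_instance m n c i j"
  unfolding valid_instance_def restrict_instance_def by auto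

lemma OPT_restrict_instance: "OPT m n (restrict_instance m n c) = OPT m n c"
proof -
  have "makespan m (restrict_instance m n c) X = makespan m c X" if "is_allocation m n X" for X
    using cost_restrict_instance allocation_subset[OF that] by (intro makespan_cong) blast
  then show ?thesis unfolding OPT_def by (metis (mono_tags, lifting) image_cong mem_Collect_eq)
qed

lemma restrict_instance_cong:
  "\<forall>i\<in>{1..m}. \<forall>j\<in>{1..n}. c i j = c' i j \<Longrightarrow> restrict_instance m n c = restrict_instance m n c'"
  unfolding restrict_instance_def by (intro ext) auto

context
  fixes m n :: nat and \<alpha> :: real
  assumes m: "m \<ge> 1" and \<alpha>: "0 \<le> \<alpha>" "\<alpha> \<le> 1"
begin

lemma is_mechanism_shift:
  "is_mechanism m n (\<lambda>c. shift_allocation m n \<alpha> (restrict_instance m n c))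
     (\<lambda>c. shift_payment m n \<alpha> (restrict_instance m n c))"
  unfolding is_mechanism_def
proof (intro conjI allI impI)
  fix c assume "valid_instance m n c"
  then show "is_allocation m n (shift_allocation m n \<alpha> (restrict_instance m n c))"
    by (intro is_allocation_shift_allocation[OF m \<alpha>] restrict_instance_nonneg)
next
  fix c c' :: "nat \<Rightarrow> nat \<Rightarrow> real"
  assume "\<forall>i\<in>{1..m}. \<forall>j\<in>{1..n}. c i j = c' i j"
  then show "\<forall>i\<in>{1..m}. shift_allocation m n \<alpha> (restrict_instance m n c) i
      = shift_allocation m n \<alpha> (restrict_instance m n c') i
    \<and> shift_payment m n \<alpha> (restrict_instance m n c) i
      = shift_payment m n \<alpha> (restrict_instance m n c') i"
    using restrict_instance_cong by metis
qed

lemma cyclic_envy_free_shift: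
  "cyclic_envy_free m n \<alpha> (\<lambda>c. shift_allocation m n \<alpha> (restrict_instance m n c))
     (\<lambda>c. shift_payment m n \<alpha> (restrict_instance m n c))"
  unfolding cyclic_envy_free_def
proof (intro allI impI ballI)
  fix c i assume c: "valid_instance m n c" and i: "i \<in> {1..m}"
  show "\<alpha> * cost c i (shift_allocation m n \<alpha> (restrict_instance m n c) i)
      - shift_payment m n \<alpha> (restrict_instance m n c) i
    \<le> cost c i (shift_allocation m n \<alpha> (restrict_instance m n c) (pred_machine m i))
      - shift_payment m n \<alpha> (restrict_instance m n c) (pred_machine m i)"
    using shift_mechanism_envy[OF m \<alpha> restrict_instance_nonneg[OF c] i]
    unfolding shift_allocation_def by (simp add: cost_restrict_instance[OF i alloc_of_subset])
qed

lemma makespan_shift: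
  assumes "valid_instance m n c"
  shows "makespan m c (shift_allocation m n \<alpha> (restrict_instance m n c))
    \<le> (\<Sum>k<m. \<alpha> ^ k) * OPT m n c"
proof -
  have "makespan m c (shift_allocation m n \<alpha> (restrict_instance m n c))
      = makespan m (restrict_instance m n c) (shift_allocation m n \<alpha> (restrict_instance m n c))"
    unfolding shift_allocation_def
    by (intro makespan_cong cost_restrict_instance[symmetric] alloc_of_subset)
  then show ?thesis
    using makespan_shift_allocation[OF m \<alpha> restrict_instance_nonneg[OF assms]]
    by (simp add: OPT_restrict_instance)
qed

end

theorem mainTheorem12:
  fixes m n :: nat and \<epsilon> :: real
  assumes "m \<ge> 2" and "n \<ge> 2" and "0 < \<epsilon>" and "\<epsilon> < 1"
  shows "\<exists>A p. is_mechanism m n A p \<and> cyclic_envy_free m n (1 - \<epsilon>) A p \<and>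
           (\<forall>c. valid_instance m n c \<longrightarrow> makespan m c (A c) \<le> (1 / \<epsilon>) * OPT m n c)"
proof (intro exI conjI allI impI)
  have m: "m \<ge> 1" and \<alpha>: "0 \<le> 1 - \<epsilon>" "1 - \<epsilon> \<le> 1" using assms by auto
  show "is_mechanism m n (\<lambda>c. shift_allocation m n (1 - \<epsilon>) (restrict_instance m n c))
      (\<lambda>c. shift_payment m n (1 - \<epsilon>) (restrict_instance m n c))"
    using is_mechanism_shift[OF m \<alpha>] .
  show "cyclic_envy_free m n (1 - \<epsilon>)
      (\<lambda>c. shift_allocation m n (1 - \<epsilon>) (restrict_instance m n c))
      (\<lambda>c. shift_payment m n (1 - \<epsilon>) (restrict_instance m n c))"
    using cyclic_envy_free_shift[OF m \<alpha>] .
  fix c assume c: "valid_instance m n c"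
  have "(\<Sum>k<m. (1 - \<epsilon>) ^ k) = (1 - (1 - \<epsilon>) ^ m) / \<epsilon>"
    using assms by (simp add: sum_gp_strict)
  also have "\<dots> \<le> 1 / \<epsilon>" using assms by (intro divide_right_mono) auto
  finally have "(\<Sum>k<m. (1 - \<epsilon>) ^ k) * OPT m n c \<le> (1 / \<epsilon>) * OPT m n c"
    using OPT_nonneg[OF m] c unfolding valid_instance_def by (intro mult_right_mono) auto
  with makespan_shift[OF m \<alpha> c]
  show "makespan m c (shift_allocation m n (1 - \<epsilon>) (restrict_instance m n c))
      \<le> (1 / \<epsilon>) * OPT m n c" by linarith
qed

end
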